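(* Let $n\ge1$ and let $(p_{kl})_{1\le k<l\le n}$ be numbers in $[0,1]$ (write $p_{lk}=p_{kl}$). Let $\mathscr{G}$ be the random undirected graph on $\{1,\dots,n\}$ in which each pair $\{k,l\}$ is an edge independently with probability $p_{kl}$, and let $\vec{\mathscr{G}}$ be the random directed graph on $\{1,\dots,n\}$ in which, for every $k\neq l$, the directed edge $(k,l)$ from $k$ to $l$ is present with probability $p_{kl}$, all these $n(n-1)$ directed edges being independent. Let $K$ be the event that $\mathscr{G}$ is connected and $G$ the event that $\vec{\mathscr{G}}$ is grounded at vertex $1$. Then $P(K)=P(G)$.
   Context: A directed graph on vertex set $\mathscr{V}$ is grounded at $v\in\mathscr{V}$ if for every $w\in\mathscr{V}$ there is a directed path from $w$ to $v$ (the trivial path for $w=v$). *)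

theory Defs
  imports "HOL-Probability.Probability"
begin

text \<open>Vertices are 1..n. The weights p k l are given for k < l; the pair {k,l} / the
  directed edge (k,l) uses p (min k l) (max k l), i.e. p_lk = p_kl.\<close>

definition und_pairs :: "nat \<Rightarrow> nat set set" where
  "und_pairs n = {{k, l} | k l. 1 \<le> k \<and> k < l \<and> l \<le> n}"

definition dir_pairs :: "nat \<Rightarrow> (nat \<times> nat) set" where
  "dir_pairs n = {(k, l). k \<in> {1..n} \<and> l \<in> {1..n} \<and> k \<noteq> l}"

definition rand_ugraph :: "nat \<Rightarrow> (nat \<Rightarrow> nat \<Rightarrow> real) \<Rightarrow> (nat set \<Rightarrow> bool) pmf" where
  "rand_ugraph n p = Pi_pmf (und_pairs n) False (\<lambda>e. bernoulli_pmf (p (Min e) (Max e)))"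

definition rand_dgraph :: "nat \<Rightarrow> (nat \<Rightarrow> nat \<Rightarrow> real) \<Rightarrow> (nat \<times> nat \<Rightarrow> bool) pmf" where
  "rand_dgraph n p = Pi_pmf (dir_pairs n) False (\<lambda>(k, l). bernoulli_pmf (p (min k l) (max k l)))"

definition ug_connected :: "nat \<Rightarrow> (nat set \<Rightarrow> bool) \<Rightarrow> bool" where
  "ug_connected n E \<longleftrightarrow>
     (\<forall>v\<in>{1..n}. \<forall>w\<in>{1..n}. (v, w) \<in> {(a, b). a \<noteq> b \<and> E {a, b}}\<^sup>*)"

definition grounded_at :: "nat \<Rightarrow> (nat \<times> nat \<Rightarrow> bool) \<Rightarrow> nat \<Rightarrow> bool" where
  "grounded_at n D v \<longleftrightarrow> (\<forall>w\<in>{1..n}. (w, v) \<in> {e. D e}\<^sup>*)"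

end

theory Submission
  imports Defs
begin

text \<open>Orient every pair {k, l} towards the root by the breadth-first layers of the directed
  graph D (pairs the layers do not separate get a fixed default orientation). Then D splits
  into the undirected graph E of its inward edges and the graph c of its outward edges, and
  (E, c) determines D. An edge entering a layer from outside points inward, so D and E have
  the same layers: D is grounded iff E is connected. Since both orientations of {k, l} are
  present with the same probability p_kl, the split maps the law of the random digraph to
  that of two independent copies of the random graph.\<close>

lemma map_pmf_eq_if_bij_betw:
  assumes bij: "bij_betw f A B" and "set_pmf M \<subseteq> A" "set_pmf N \<subseteq> B"
    and pmf_eq: "\<And>x. x \<in> A \<Longrightarrow> pmf N (f x) = pmf M x"
  shows "map_pmf f M = N"
proof (rule pmf_eqI)
  fix y
  show "pmf (map_pmf f M) y = pmf N y"
  proof (cases "y \<in> B")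
    case True
    then obtain x where x: "x \<in> A" "y = f x"
      using bij by (auto simp: bij_betw_def)
    have "f -` {y} \<inter> A = {x}"
      using bij x by (auto simp: bij_betw_def inj_on_def)
    then have "measure_pmf.prob M (f -` {y}) = measure_pmf.prob M {x}"
      using \<open>set_pmf M \<subseteq> A\<close> by (intro measure_prob_cong_0) (auto simp: set_pmf_eq)
    then show ?thesis
      using x pmf_eq by (simp add: pmf_map measure_pmf_single)
  next
    case False
    have "f -` {y} \<inter> A = {}"
      using bij False by (auto simp: bij_betw_def)
    then have "measure_pmf.prob M (f -` {y}) = 0"
      using \<open>set_pmf M \<subseteq> A\<close> by (subst measure_pmf_zero_iff) blast
    moreover have "pmf N y = 0"
      using False \<open>set_pmf N \<subseteq> B\<close> by (auto simp: set_pmf_eq)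
    ultimately show ?thesis
      by (simp add: pmf_map)
  qed
qed

fun reach_layer :: "'a rel \<Rightarrow> 'a \<Rightarrow> nat \<Rightarrow> 'a set" where
  "reach_layer R r 0 = {r}"
| "reach_layer R r (Suc k) = reach_layer R r k \<union> {w. \<exists>s\<in>reach_layer R r k. (w, s) \<in> R}"

lemma reach_layer_Suc_mono: "reach_layer R r k \<subseteq> reach_layer R r (Suc k)"
  by auto

lemma ex_reach_layer_iff_rtrancl: "(\<exists>k. w \<in> reach_layer R r k) \<longleftrightarrow> (w, r) \<in> R\<^sup>*"
proof
  assume "\<exists>k. w \<in> reach_layer R r k"
  then obtain k where "w \<in> reach_layer R r k" ..
  then show "(w, r) \<in> R\<^sup>*"
    by (induction k arbitrary: w) (auto intro: converse_rtrancl_into_rtrancl)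
next
  assume "(w, r) \<in> R\<^sup>*"
  then show "\<exists>k. w \<in> reach_layer R r k"
  proof (induction rule: converse_rtrancl_induct)
    case base
    have "r \<in> reach_layer R r 0" by simp
    then show ?case ..
  next
    case (step w s)
    then obtain k where "s \<in> reach_layer R r k" by blast
    with step have "w \<in> reach_layer R r (Suc k)" by auto
    then show ?case ..
  qed
qed

lemma reach_layer_cong:
  assumes "\<And>k w s. w \<notin> reach_layer R r k \<Longrightarrow> s \<in> reach_layer R r k \<Longrightarrow>
      (w, s) \<in> R \<longleftrightarrow> (w, s) \<in> S"
  shows "reach_layer R r = reach_layer S r"
proof
  fix k show "reach_layer R r k = reach_layer S r k"
  proof (induction k)
    case (Suc k)
    have "reach_layer R r (Suc k) =
        reach_layer R r k \<union> {w. w \<notin> reach_layer R r k \<and> (\<exists>s\<in>reach_layer R r k. (w, s) \<in> R)}"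
      by auto
    also have "\<dots> =
        reach_layer R r k \<union> {w. w \<notin> reach_layer R r k \<and> (\<exists>s\<in>reach_layer R r k. (w, s) \<in> S)}"
      using assms by blast
    also have "\<dots> = reach_layer S r (Suc k)"
      using Suc by auto
    finally show ?case .
  qed simp
qed

definition closer :: "(nat \<Rightarrow> 'a set) \<Rightarrow> 'a \<Rightarrow> 'a \<Rightarrow> bool" where
  "closer L x y \<longleftrightarrow> (\<exists>k. x \<in> L k \<and> y \<notin> L k)"

lemma closer_asym:
  assumes "\<And>k. L k \<subseteq> L (Suc k)" "closer L x y"
  shows "\<not> closer L y x"
proof
  assume "closer L y x"
  have mono: "i \<le> j \<Longrightarrow> L i \<subseteq> L j" for i j
    using lift_Suc_mono_le[of L, OF assms(1)] by blast
  from assms(2) obtain i where "x \<in> L i" "y \<notin> L i" by (auto simp: closer_def)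
  moreover from \<open>closer L y x\<close> obtain j where "y \<in> L j" "x \<notin> L j" by (auto simp: closer_def)
  ultimately show False
    using mono[of i j] mono[of j i] by (cases "i \<le> j") auto
qed

definition inward :: "(nat \<Rightarrow> nat set) \<Rightarrow> nat set \<Rightarrow> nat \<times> nat" where
  "inward L e = (if closer L (Min e) (Max e) then (Max e, Min e) else (Min e, Max e))"

lemma inward_doubleton_cases:
  assumes "a \<noteq> b"
  shows "inward L {a, b} = (a, b) \<or> inward L {a, b} = (b, a)"
  using assms by (cases "a < b") (auto simp: inward_def min_def max_def)

lemma inward_layer_crossing:
  assumes "\<And>k. L k \<subseteq> L (Suc k)" "w \<notin> L k" "s \<in> L k"
  shows "inward L {w, s} = (w, s)"
proof -
  have "closer L s w" using assms by (auto simp: closer_def)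
  moreover have "\<not> closer L w s" using closer_asym[OF assms(1) \<open>closer L s w\<close>] .
  moreover have "w \<noteq> s" using assms by auto
  ultimately show ?thesis
    by (cases "w < s") (auto simp: inward_def min_def max_def)
qed

lemma finite_und_pairs: "finite (und_pairs n)"
  by (rule finite_subset[of _ "Pow {1..n}"]) (auto simp: und_pairs_def)

lemma finite_dir_pairs: "finite (dir_pairs n)"
  by (rule finite_subset[of _ "{1..n} \<times> {1..n}"]) (auto simp: dir_pairs_def)

lemma dir_pairs_iff: "(a, b) \<in> dir_pairs n \<longleftrightarrow> a \<noteq> b \<and> a \<in> {1..n} \<and> b \<in> {1..n}"
  by (auto simp: dir_pairs_def)

lemma doubleton_in_und_pairs_iff: "{a, b} \<in> und_pairs n \<longleftrightarrow> (a, b) \<in> dir_pairs n"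
  by (auto simp: und_pairs_def dir_pairs_def doubleton_eq_iff; metis linorder_neqE_nat)

lemma und_pairsE:
  assumes "e \<in> und_pairs n"
  obtains a b where "e = {a, b}" "(a, b) \<in> dir_pairs n"
  using assms by (auto simp: und_pairs_def dir_pairs_def)

lemma prod_dir_pairs_oriented:
  assumes orientation:
    "\<And>e. e \<in> und_pairs n \<Longrightarrow> orient e \<in> dir_pairs n \<and> {fst (orient e), snd (orient e)} = e"
  shows "(\<Prod>d\<in>dir_pairs n. h d) = (\<Prod>e\<in>und_pairs n. h (orient e) * h (prod.swap (orient e)))"
proof -
  let ?edge = "\<lambda>d. {fst d, snd d}"
  have fibre: "{d \<in> dir_pairs n. ?edge d = e} = {orient e, prod.swap (orient e)}" if "e \<in> und_pairs n" for e
  proof -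
    obtain a b where ab: "orient e = (a, b)" by force
    then have "e = {a, b}" "(a, b) \<in> dir_pairs n" using orientation[OF that] by auto
    then show ?thesis using ab by (auto simp: doubleton_eq_iff dir_pairs_iff)
  qed
  have "(\<Prod>d\<in>dir_pairs n. h d) = (\<Prod>e\<in>und_pairs n. \<Prod>d\<in>{d \<in> dir_pairs n. ?edge d = e}. h d)"
  proof (rule prod.group[symmetric])
    show "finite (dir_pairs n)" by (rule finite_dir_pairs)
    show "finite (und_pairs n)" by (rule finite_und_pairs)
    show "?edge ` dir_pairs n \<subseteq> und_pairs n"
      using doubleton_in_und_pairs_iff by force
  qed
  also have "\<dots> = (\<Prod>e\<in>und_pairs n. h (orient e) * h (prod.swap (orient e)))"
  proof (rule prod.cong)
    fix e assume "e \<in> und_pairs n"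
    moreover have "prod.swap (orient e) \<noteq> orient e"
      using orientation[OF \<open>e \<in> und_pairs n\<close>] by (cases "orient e") (auto simp: dir_pairs_iff)
    ultimately show "(\<Prod>d\<in>{d \<in> dir_pairs n. ?edge d = e}. h d) = h (orient e) * h (prod.swap (orient e))"
      by (simp add: fibre)
  qed simp
  finally show ?thesis .
qed

definition ug_edges :: "(nat set \<Rightarrow> bool) \<Rightarrow> nat rel" where
  "ug_edges E = {(a, b). a \<noteq> b \<and> E {a, b}}"

lemma ug_connected_iff_reach_root:
  assumes "r \<in> {1..n}"
  shows "ug_connected n E \<longleftrightarrow> (\<forall>w\<in>{1..n}. (w, r) \<in> (ug_edges E)\<^sup>*)"
proof
  assume "\<forall>w\<in>{1..n}. (w, r) \<in> (ug_edges E)\<^sup>*"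
  moreover have "sym ((ug_edges E)\<^sup>*)"
    by (rule sym_rtrancl) (auto simp: sym_def ug_edges_def insert_commute)
  ultimately show "ug_connected n E"
    unfolding ug_connected_def ug_edges_def[symmetric]
    by (meson rtrancl_trans symD)
qed (use assms in \<open>auto simp: ug_connected_def ug_edges_def\<close>)

definition split_dgraph ::
    "nat \<Rightarrow> nat \<Rightarrow> (nat \<times> nat \<Rightarrow> bool) \<Rightarrow> (nat set \<Rightarrow> bool) \<times> (nat set \<Rightarrow> bool)" where
  "split_dgraph n r D =
     (let L = reach_layer (Collect D) r
      in (\<lambda>e. e \<in> und_pairs n \<and> D (inward L e),
          \<lambda>e. e \<in> und_pairs n \<and> D (prod.swap (inward L e))))"

definition merge_ugraphs ::
    "nat \<Rightarrow> nat \<Rightarrow> (nat set \<Rightarrow> bool) \<Rightarrow> (nat set \<Rightarrow> bool) \<Rightarrow> nat \<times> nat \<Rightarrow> bool" where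
  "merge_ugraphs n r E c d =
     (d \<in> dir_pairs n \<and>
      (if inward (reach_layer (ug_edges E) r) {fst d, snd d} = d
       then E {fst d, snd d} else c {fst d, snd d}))"

abbreviation supported_on :: "'a set \<Rightarrow> ('a \<Rightarrow> bool) set" where
  "supported_on A \<equiv> PiE_dflt A False (\<lambda>_. UNIV)"

lemma reach_layer_split_dgraph:
  assumes "D \<in> supported_on (dir_pairs n)"
  shows "reach_layer (ug_edges (fst (split_dgraph n r D))) r = reach_layer (Collect D) r"
proof (rule sym, rule reach_layer_cong)
  fix k w s
  assume "w \<notin> reach_layer (Collect D) r k" "s \<in> reach_layer (Collect D) r k"
  then have "w \<noteq> s" "inward (reach_layer (Collect D) r) {w, s} = (w, s)"
    using inward_layer_crossing[of "reach_layer (Collect D) r", OF reach_layer_Suc_mono] by auto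
  then show "(w, s) \<in> Collect D \<longleftrightarrow> (w, s) \<in> ug_edges (fst (split_dgraph n r D))"
    using assms by (auto simp: ug_edges_def split_dgraph_def Let_def doubleton_in_und_pairs_iff PiE_dflt_def)
qed

lemma reach_layer_merge_ugraphs:
  assumes "E \<in> supported_on (und_pairs n)"
  shows "reach_layer (Collect (merge_ugraphs n r E c)) r = reach_layer (ug_edges E) r"
proof (rule sym, rule reach_layer_cong)
  fix k w s
  assume "w \<notin> reach_layer (ug_edges E) r k" "s \<in> reach_layer (ug_edges E) r k"
  then have "w \<noteq> s" "inward (reach_layer (ug_edges E) r) {w, s} = (w, s)"
    using inward_layer_crossing[of "reach_layer (ug_edges E) r", OF reach_layer_Suc_mono] by auto
  then show "(w, s) \<in> ug_edges E \<longleftrightarrow> (w, s) \<in> Collect (merge_ugraphs n r E c)"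
    using assms doubleton_in_und_pairs_iff[of w s n]
    by (auto simp: ug_edges_def merge_ugraphs_def PiE_dflt_def)
qed

lemma split_merge_ugraphs:
  assumes "E \<in> supported_on (und_pairs n)" "c \<in> supported_on (und_pairs n)"
  shows "split_dgraph n r (merge_ugraphs n r E c) = (E, c)"
proof -
  let ?L = "reach_layer (ug_edges E) r"
  have "(e \<in> und_pairs n \<and> merge_ugraphs n r E c (inward ?L e) \<longleftrightarrow> E e) \<and>
        (e \<in> und_pairs n \<and> merge_ugraphs n r E c (prod.swap (inward ?L e)) \<longleftrightarrow> c e)" for e
  proof (cases "e \<in> und_pairs n")
    case True
    then obtain a b where e: "e = {a, b}" "(a, b) \<in> dir_pairs n"
      by (rule und_pairsE)
    then have "a \<noteq> b" "(b, a) \<in> dir_pairs n" "{b, a} = e"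
      by (auto simp: dir_pairs_iff)
    with e True show ?thesis
      using inward_doubleton_cases[of a b ?L] by (auto simp: merge_ugraphs_def)
  qed (use assms in \<open>auto simp: PiE_dflt_def\<close>)
  then show ?thesis
    using reach_layer_merge_ugraphs[OF assms(1)] by (auto simp: split_dgraph_def Let_def)
qed

lemma merge_split_dgraph:
  assumes "D \<in> supported_on (dir_pairs n)"
  shows "case_prod (merge_ugraphs n r) (split_dgraph n r D) = D"
proof
  fix d
  let ?L = "reach_layer (Collect D) r"
  show "case_prod (merge_ugraphs n r) (split_dgraph n r D) d = D d"
  proof (cases "d \<in> dir_pairs n")
    case True
    obtain a b where d: "d = (a, b)" by force
    with True have "{a, b} \<in> und_pairs n" "a \<noteq> b"
      by (auto simp: doubleton_in_und_pairs_iff dir_pairs_iff)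
    then show ?thesis
      using True d inward_doubleton_cases[of a b ?L] reach_layer_split_dgraph[OF assms]
      by (auto simp: merge_ugraphs_def split_dgraph_def Let_def insert_commute)
  next
    case False
    then show ?thesis
      using assms by (cases d; cases "split_dgraph n r D") (auto simp: merge_ugraphs_def PiE_dflt_def)
  qed
qed

lemma bij_betw_split_dgraph:
  "bij_betw (split_dgraph n r) (supported_on (dir_pairs n))
     (supported_on (und_pairs n) \<times> supported_on (und_pairs n))"
  by (rule bij_betw_byWitness[where f' = "case_prod (merge_ugraphs n r)"])
     (auto simp: split_merge_ugraphs merge_split_dgraph,
      auto simp: split_dgraph_def merge_ugraphs_def PiE_dflt_def Let_def)

lemma inward_orients_und_pair:
  assumes "e \<in> und_pairs n"
  shows "inward L e \<in> dir_pairs n \<and> {fst (inward L e), snd (inward L e)} = e"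
proof -
  obtain a b where "e = {a, b}" "(a, b) \<in> dir_pairs n"
    using assms by (rule und_pairsE)
  then show ?thesis
    using inward_doubleton_cases[of a b L] by (auto simp: dir_pairs_iff)
qed

lemma set_pmf_rand_ugraph: "set_pmf (rand_ugraph n p) \<subseteq> supported_on (und_pairs n)"
  unfolding rand_ugraph_def PiE_dflt_def by (rule order.trans[OF set_Pi_pmf_subset[OF finite_und_pairs]]) auto

lemma set_pmf_rand_dgraph: "set_pmf (rand_dgraph n p) \<subseteq> supported_on (dir_pairs n)"
  unfolding rand_dgraph_def PiE_dflt_def by (rule order.trans[OF set_Pi_pmf_subset[OF finite_dir_pairs]]) auto

lemma pmf_pair_rand_ugraph_split_dgraph:
  assumes "D \<in> supported_on (dir_pairs n)"
  shows "pmf (pair_pmf (rand_ugraph n p) (rand_ugraph n p)) (split_dgraph n r D) = pmf (rand_dgraph n p) D"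
proof -
  let ?L = "reach_layer (Collect D) r"
  let ?B = "\<lambda>e. bernoulli_pmf (p (Min e) (Max e))"
  define h where "h d = pmf (bernoulli_pmf (p (min (fst d) (snd d)) (max (fst d) (snd d)))) (D d)" for d
  have h_oriented: "h d = pmf (?B e) (D d)" if "{fst d, snd d} = e" for d e
    using that by (auto simp: h_def)
  have "pmf (rand_dgraph n p) D = (\<Prod>d\<in>dir_pairs n. h d)"
    using assms by (auto simp: rand_dgraph_def pmf_Pi finite_dir_pairs PiE_dflt_def h_def intro!: prod.cong)
  also have "\<dots> = (\<Prod>e\<in>und_pairs n. h (inward ?L e) * h (prod.swap (inward ?L e)))"
    by (rule prod_dir_pairs_oriented) (rule inward_orients_und_pair)
  also have "\<dots> = (\<Prod>e\<in>und_pairs n. pmf (?B e) (D (inward ?L e)) * pmf (?B e) (D (prod.swap (inward ?L e))))"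
  proof (rule prod.cong[OF refl])
    fix e assume "e \<in> und_pairs n"
    then have "{fst (inward ?L e), snd (inward ?L e)} = e"
      "{fst (prod.swap (inward ?L e)), snd (prod.swap (inward ?L e))} = e"
      using inward_orients_und_pair by (auto simp: insert_commute)
    then show "h (inward ?L e) * h (prod.swap (inward ?L e))
        = pmf (?B e) (D (inward ?L e)) * pmf (?B e) (D (prod.swap (inward ?L e)))"
      by (simp add: h_oriented)
  qed
  also have "\<dots> = pmf (rand_ugraph n p) (fst (split_dgraph n r D)) * pmf (rand_ugraph n p) (snd (split_dgraph n r D))"
    by (auto simp: rand_ugraph_def pmf_Pi finite_und_pairs split_dgraph_def Let_def prod.distrib
        intro!: prod.cong)
  finally show ?thesis
    by (metis pmf_pair prod.collapse)
qed

lemma map_pmf_split_rand_dgraph: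
  "map_pmf (split_dgraph n r) (rand_dgraph n p) = pair_pmf (rand_ugraph n p) (rand_ugraph n p)"
  using set_pmf_rand_ugraph
  by (intro map_pmf_eq_if_bij_betw[OF bij_betw_split_dgraph] set_pmf_rand_dgraph
      pmf_pair_rand_ugraph_split_dgraph) auto

corollary map_pmf_inward_subgraph_rand_dgraph:
  "map_pmf (fst \<circ> split_dgraph n r) (rand_dgraph n p) = rand_ugraph n p"
  by (metis pmf.map_comp map_pmf_split_rand_dgraph map_fst_pair_pmf)

lemma grounded_at_iff_ug_connected_split_dgraph:
  assumes "r \<in> {1..n}" "D \<in> supported_on (dir_pairs n)"
  shows "grounded_at n D r \<longleftrightarrow> ug_connected n (fst (split_dgraph n r D))"
  unfolding grounded_at_def ug_connected_iff_reach_root[OF assms(1)]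
    ex_reach_layer_iff_rtrancl[symmetric] reach_layer_split_dgraph[OF assms(2)]
  by simp

theorem lemma3p2:
  fixes n :: nat and p :: "nat \<Rightarrow> nat \<Rightarrow> real"
  assumes "n \<ge> 1"
    and "\<And>k l. 1 \<le> k \<Longrightarrow> k < l \<Longrightarrow> l \<le> n \<Longrightarrow> 0 \<le> p k l \<and> p k l \<le> 1"
  shows "measure_pmf.prob (rand_ugraph n p) {E. ug_connected n E}
       = measure_pmf.prob (rand_dgraph n p) {D. grounded_at n D 1}"
proof -
  have root: "1 \<in> {1..n}"
    using assms(1) by simp
  have "measure_pmf.prob (rand_ugraph n p) {E. ug_connected n E}
      = measure_pmf.prob (rand_dgraph n p) {D. ug_connected n (fst (split_dgraph n 1 D))}"
    by (subst map_pmf_inward_subgraph_rand_dgraph[symmetric, where r = 1]) (simp add: vimage_def)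
  also have "\<dots> = measure_pmf.prob (rand_dgraph n p) {D. grounded_at n D 1}"
    using grounded_at_iff_ug_connected_split_dgraph[OF root] set_pmf_rand_dgraph
    by (intro measure_prob_cong_0) (auto simp: set_pmf_eq)
  finally show ?thesis .
qed

end
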